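(* Let $\mathcal{T}=(\mathcal{E},\mathcal{A})$ be a finite directed tree with root environment $0\in\mathcal{E}$, where $\mathcal{A}\subset\mathcal{E}^2$ is the set of arcs. Let $k\ge 1$. Suppose we are given a root weight vector $w_0\in\mathbb{R}^k$ and, for each arc $a=(e_m,e_n)\in\mathcal{A}$, a vector $\delta_a\in\mathbb{R}^k$, and define for every $e\in\mathcal{E}$ $$w_e := w_0+\sum_{a\in \mathrm{path}(0,e)}\delta_a,$$ where $\mathrm{path}(0,e)$ is the set of arcs on the directed path from $0$ to $e$ (so that $\delta_a=w_{e_n}-w_{e_m}$ for each arc $a=(e_m,e_n)$). Let $\Psi:\mathcal{X}\to\mathbb{R}^k$, where $\mathcal{X}\subseteq\mathbb{R}^d$. Assume: (i) for each environment $e\in\mathcal{E}$, pairs $(\mathbf{X},Y)$ are drawn i.i.d. from a distribution satisfying $\mathbb{E}[Y\mid \mathbf{X},e]=w_e^\top\Psi(\mathbf{X})$, and the support of $p(x\mid e)$ is the same set $\mathcal{X}$ for all $e$; (ii) there exist environments $e_1,\dots,e_k\in\mathcal{E}$ such that the matrix $[w_{e_1},\dots,w_{e_k}]$ is invertible; (iii) there exist $x^1,\dots,x^k\in\mathcal{X}$ such that the matrix $[\Psi(x^1),\dots,\Psi(x^k)]$ is invertible. Now let $\hat w_0\in\mathbb{R}^k$, $\hat\delta_a\in\mathbb{R}^k$ for $a\in\mathcal{A}$, and $\hat\Psi:\mathcal{X}\to\mathbb{R}^k$ be arbitrary, and define $\hat w_e:=\hat w_0+\sum_{a\in\mathrm{path}(0,e)}\hat\delta_a$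 for all $e\in\mathcal{E}$. If $\mathbb{E}[Y\mid \mathbf{X}=x,e]=\hat w_e^\top\hat\Psi(x)$ for all $x\in\mathcal{X}$ and all $e\in\mathcal{E}$, then there exists an invertible matrix $\mathbf{L}\in\mathbb{R}^{k\times k}$ such that: 1. $\Psi(x)=\mathbf{L}\hat\Psi(x)$ for all $x\in\mathcal{X}$; 2. $w_e^\top\mathbf{L}=\hat w_e^\top$ for all $e\in\mathcal{E}$; 3. $\delta_a^\top\mathbf{L}=\hat\delta_a^\top$ for all $a\in\mathcal{A}$.
   Context: Environments are the nodes of the tree; the model is $\mathbf{Z}=\Psi(\mathbf{X})+\eta$, $Y^e=w_e^\top\mathbf{Z}^e+\epsilon$, with latent dimension $k$. The learned quantities $\hat w_0,\hat\delta_a,\hat\Psi$ have the same dimension $k$ as the true ones. *)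

theory Defs
  imports "HOL-Analysis.Analysis"
begin

definition dwalk :: "('e \<times> 'e) set \<Rightarrow> 'e list \<Rightarrow> bool" where
  "dwalk A xs \<longleftrightarrow> xs \<noteq> [] \<and> (\<forall>i. Suc i < length xs \<longrightarrow> (xs ! i, xs ! Suc i) \<in> A)"

definition directed_tree :: "'e set \<Rightarrow> ('e \<times> 'e) set \<Rightarrow> 'e \<Rightarrow> bool" where
  "directed_tree E A r \<longleftrightarrow> finite E \<and> A \<subseteq> E \<times> E \<and> r \<in> E \<and>
     (\<forall>e\<in>E. \<exists>!xs. dwalk A xs \<and> hd xs = r \<and> last xs = e)"

definition path_arcs :: "('e \<times> 'e) set \<Rightarrow> 'e \<Rightarrow> 'e \<Rightarrow> ('e \<times> 'e) set" where
  "path_arcs A r e =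
     (let xs = (THE xs. dwalk A xs \<and> hd xs = r \<and> last xs = e) in set (zip xs (tl xs)))"

definition tree_weight ::
  "('e \<times> 'e) set \<Rightarrow> 'e \<Rightarrow> real^'k \<Rightarrow> ('e \<times> 'e \<Rightarrow> real^'k) \<Rightarrow> 'e \<Rightarrow> real^'k" where
  "tree_weight A r w0 \<delta> e = w0 + (\<Sum>a\<in>path_arcs A r e. \<delta> a)"

end

theory Submission
  imports Defs
begin

text \<open>Environment diversity makes the weights \<open>w\<^sub>e\<^sub>1, \<dots>, w\<^sub>e\<^sub>k\<close> a basis. Stacking them as the
  rows of \<open>W\<close>, and the fitted weights as the rows of \<open>Wh\<close>, the model identity on these
  environments reads \<open>W \<Psi>(x) = Wh \<Psi>h(x)\<close>, whence \<open>\<Psi> = L \<Psi>h\<close> for \<open>L = W\<^sup>-\<^sup>1 Wh\<close>. Feature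
  diversity then makes both \<open>L\<close> and the matrix with columns \<open>\<Psi>h(x\<^sup>i)\<close> invertible; since these
  columns form a basis, \<open>(w\<^sub>e\<^sup>T L) \<Psi>h(x\<^sup>i) = w\<^sub>e\<^sup>T \<Psi>(x\<^sup>i) = wh\<^sub>e\<^sup>T \<Psi>h(x\<^sup>i)\<close> gives \<open>w\<^sub>e\<^sup>T L = wh\<^sub>e\<^sup>T\<close>.
  Finally, the root path to the head of an arc is the root path to its tail followed by the
  arc, so \<open>\<delta>\<^sub>a\<close> is a difference of two weights and is transformed by \<open>L\<close> like them.\<close>

definition root_walk :: "('e \<times> 'e) set \<Rightarrow> 'e \<Rightarrow> 'e \<Rightarrow> 'e list" where
  "root_walk A r e = (THE xs. dwalk A xs \<and> hd xs = r \<and> last xs = e)"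

lemma path_arcs_root_walk:
  "path_arcs A r e = set (zip (root_walk A r e) (tl (root_walk A r e)))"
  unfolding path_arcs_def root_walk_def Let_def ..

lemma finite_path_arcs: "finite (path_arcs A r e)"
  by (simp add: path_arcs_root_walk)

lemma dwalk_snoc:
  assumes "dwalk A xs" and "(last xs, v) \<in> A"
  shows "dwalk A (xs @ [v])"
  unfolding dwalk_def
proof (intro conjI allI impI)
  fix i assume i: "Suc i < length (xs @ [v])"
  have "xs \<noteq> []" using assms(1) by (simp add: dwalk_def)
  show "((xs @ [v]) ! i, (xs @ [v]) ! Suc i) \<in> A"
  proof (cases "Suc i < length xs")
    case True
    then show ?thesis using assms(1) by (simp add: nth_append dwalk_def)
  next
    case False
    with i have "Suc i = length xs" by simp
    with \<open>xs \<noteq> []\<close> have "xs ! i = last xs" by (metis diff_Suc_1 last_conv_nth)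
    with \<open>Suc i = length xs\<close> show ?thesis using assms(2) by (simp add: nth_append)
  qed
qed simp

lemma dwalk_take:
  assumes "dwalk A xs" and "0 < n"
  shows "dwalk A (take n xs)"
  using assms unfolding dwalk_def by auto

lemma
  assumes "directed_tree E A r" and "e \<in> E"
  shows dwalk_root_walk: "dwalk A (root_walk A r e)"
    and root_walk_not_Nil: "root_walk A r e \<noteq> []"
    and hd_root_walk: "hd (root_walk A r e) = r"
    and last_root_walk: "last (root_walk A r e) = e"
  using assms theI'[of "\<lambda>xs. dwalk A xs \<and> hd xs = r \<and> last xs = e"]
  unfolding directed_tree_def root_walk_def dwalk_def by auto

lemma root_walk_unique:
  assumes "directed_tree E A r" and "e \<in> E"
    and "dwalk A xs" and "hd xs = r" and "last xs = e"
  shows "root_walk A r e = xs"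
  using assms the1_equality[of "\<lambda>xs. dwalk A xs \<and> hd xs = r \<and> last xs = e"]
  unfolding directed_tree_def root_walk_def by auto

lemma arc_in_vertices:
  assumes "directed_tree E A r" and "(u, v) \<in> A"
  shows "u \<in> E" and "v \<in> E"
  using assms unfolding directed_tree_def by auto

lemma root_walk_arc:
  assumes tree: "directed_tree E A r" and arc: "(u, v) \<in> A"
  shows "root_walk A r v = root_walk A r u @ [v]"
proof -
  have "u \<in> E" "v \<in> E" using arc_in_vertices[OF tree arc] .
  with tree arc show ?thesis
    by (intro root_walk_unique dwalk_snoc)
       (simp_all add: dwalk_root_walk root_walk_not_Nil hd_root_walk last_root_walk)
qed

lemma set_zip_tl_snoc:
  "xs \<noteq> [] \<Longrightarrow> set (zip (xs @ [v]) (tl (xs @ [v]))) = insert (last xs, v) (set (zip xs (tl xs)))"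
  by (induction xs rule: induct_list012) auto

text \<open>If the arc already occurred on the root path of its tail, cutting that path right after
  the arc would give a second, shorter walk from the root to its head.\<close>
lemma arc_notin_path_arcs_tail:
  assumes tree: "directed_tree E A r" and arc: "(u, v) \<in> A"
  shows "(u, v) \<notin> path_arcs A r u"
proof
  assume "(u, v) \<in> path_arcs A r u"
  define xs where "xs = root_walk A r u"
  have "u \<in> E" "v \<in> E" using arc_in_vertices[OF tree arc] .
  have walk: "dwalk A xs" "hd xs = r" using tree \<open>u \<in> E\<close>
    by (simp_all add: xs_def dwalk_root_walk hd_root_walk)
  from \<open>(u, v) \<in> path_arcs A r u\<close> obtain i where "Suc i < length xs" "xs ! Suc i = v"
    by (auto simp: path_arcs_root_walk xs_def[symmetric] in_set_zip nth_tl less_diff_conv)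
  define ys where "ys = take (Suc (Suc i)) xs"
  have "dwalk A ys" "hd ys = r" using walk by (simp_all add: ys_def dwalk_take)
  moreover have "last ys = v"
    using \<open>Suc i < length xs\<close> \<open>xs ! Suc i = v\<close> by (simp add: ys_def take_Suc_conv_app_nth)
  ultimately have "root_walk A r v = ys"
    by (rule root_walk_unique[OF tree \<open>v \<in> E\<close>])
  moreover have "root_walk A r v = xs @ [v]"
    using root_walk_arc[OF tree arc] by (simp add: xs_def)
  ultimately have "length ys = Suc (length xs)" by (metis length_append_singleton)
  then show False by (simp add: ys_def)
qed

lemma path_arcs_arc:
  assumes tree: "directed_tree E A r" and arc: "(u, v) \<in> A"
  shows "path_arcs A r v = insert (u, v) (path_arcs A r u)"
proof -
  have "u \<in> E" using arc_in_vertices[OF tree arc] by simp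
  with tree have "root_walk A r u \<noteq> []" "last (root_walk A r u) = u"
    by (simp_all add: root_walk_not_Nil last_root_walk)
  then show ?thesis
    using set_zip_tl_snoc[of "root_walk A r u" v]
    by (simp add: path_arcs_root_walk root_walk_arc[OF tree arc])
qed

lemma tree_weight_arc:
  assumes "directed_tree E A r" and "(u, v) \<in> A"
  shows "\<delta> (u, v) = tree_weight A r w \<delta> v - tree_weight A r w \<delta> u"
  using assms by (simp add: tree_weight_def path_arcs_arc arc_notin_path_arcs_tail finite_path_arcs)

lemma vec_eq_if_inner_eq_columns:
  fixes u v :: "real^'k" and b :: "'k \<Rightarrow> real^'k"
  assumes "invertible (\<chi> j i. b i $ j)" and "\<And>i. u \<bullet> b i = v \<bullet> b i"
  shows "u = v"
proof -
  have "transpose (\<chi> j i. b i $ j) = (\<chi> i. b i)"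
    by (simp add: transpose_def)
  then have "invertible (\<chi> i. b i)"
    using transpose_invertible[OF assms(1)] by simp
  moreover have "(\<chi> i. b i) *v u = (\<chi> i. b i) *v v"
    using assms(2) by (simp add: matrix_mult_dot inner_commute)
  ultimately show ?thesis
    by (metis inj_matrix_vector_mult injD)
qed

lemma matrix_mult_columns:
  fixes L :: "'a::comm_semiring_1^'n^'m" and y :: "'k::finite \<Rightarrow> 'a^'n"
  shows "L ** (\<chi> j i. y i $ j) = (\<chi> j i. (L *v y i) $ j)"
  by (simp add: matrix_matrix_mult_def matrix_vector_mult_def vec_eq_iff)

lemma invertible_mult_factors:
  fixes M N :: "'a::field^'n^'n"
  assumes "invertible (M ** N)"
  shows "invertible M" and "invertible N"
  using assms by (simp_all add: invertible_det_nz det_mul)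

lemma inner_factorization_unique:
  fixes w wh :: "'e \<Rightarrow> real^'k" and \<Psi> \<Psi>h :: "'x \<Rightarrow> real^'k"
    and es :: "'k \<Rightarrow> 'e" and xs :: "'k \<Rightarrow> 'x"
  assumes fit: "\<And>e x. e \<in> E \<Longrightarrow> x \<in> X \<Longrightarrow> w e \<bullet> \<Psi> x = wh e \<bullet> \<Psi>h x"
    and es: "\<And>i. es i \<in> E" and W: "invertible (\<chi> j i. w (es i) $ j)"
    and xs: "\<And>i. xs i \<in> X" and P: "invertible (\<chi> j i. \<Psi> (xs i) $ j)"
  obtains L :: "real^'k^'k"
  where "invertible L" and "\<And>x. x \<in> X \<Longrightarrow> \<Psi> x = L *v \<Psi>h x"
    and "\<And>e. e \<in> E \<Longrightarrow> w e v* L = wh e"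
proof -
  have "transpose (\<chi> j i. w (es i) $ j) = (\<chi> i. w (es i))"
    by (simp add: transpose_def)
  then have "invertible (\<chi> i. w (es i))"
    using transpose_invertible[OF W] by simp
  then obtain Wi where Wi: "Wi ** (\<chi> i. w (es i)) = mat 1"
    using invertible_left_inverse by blast
  define L where "L = Wi ** (\<chi> i. wh (es i))"
  have \<Psi>: "\<Psi> x = L *v \<Psi>h x" if "x \<in> X" for x
  proof -
    have "(\<chi> i. w (es i)) *v \<Psi> x = (\<chi> i. wh (es i)) *v \<Psi>h x"
      using fit es that by (simp add: matrix_mult_dot)
    then have "Wi *v ((\<chi> i. w (es i)) *v \<Psi> x) = L *v \<Psi>h x"
      by (simp add: L_def matrix_vector_mul_assoc)
    then show ?thesis
      by (simp add: matrix_vector_mul_assoc Wi)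
  qed
  have "(\<chi> j i. \<Psi> (xs i) $ j) = L ** (\<chi> j i. \<Psi>h (xs i) $ j)"
    by (simp add: matrix_mult_columns \<Psi> xs)
  with P have L: "invertible L" and Ph: "invertible (\<chi> j i. \<Psi>h (xs i) $ j)"
    using invertible_mult_factors by metis+
  have "w e v* L = wh e" if "e \<in> E" for e
  proof (rule vec_eq_if_inner_eq_columns[OF Ph])
    fix i
    have "(w e v* L) \<bullet> \<Psi>h (xs i) = w e \<bullet> \<Psi> (xs i)"
      by (simp add: dot_lmul_matrix \<Psi> xs)
    also have "\<dots> = wh e \<bullet> \<Psi>h (xs i)"
      using fit that xs .
    finally show "(w e v* L) \<bullet> \<Psi>h (xs i) = wh e \<bullet> \<Psi>h (xs i)" .
  qed
  with L \<Psi> show thesis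
    using that by blast
qed

theorem proposition4p4:
  fixes E :: "'e set" and A :: "('e \<times> 'e) set" and r :: 'e
    and X :: "(real^'d) set"
    and w0 :: "real^'k" and \<delta> :: "'e \<times> 'e \<Rightarrow> real^'k" and \<Psi> :: "real^'d \<Rightarrow> real^'k"
    and w0h :: "real^'k" and \<delta>h :: "'e \<times> 'e \<Rightarrow> real^'k" and \<Psi>h :: "real^'d \<Rightarrow> real^'k"
    and m :: "'e \<Rightarrow> real^'d \<Rightarrow> real"
  assumes tree: "directed_tree E A r"
    and model: "\<forall>e\<in>E. \<forall>x\<in>X. m e x = tree_weight A r w0 \<delta> e \<bullet> \<Psi> x"
    and env_div: "\<exists>es :: 'k \<Rightarrow> 'e. (\<forall>i. es i \<in> E) \<and>
                    invertible (\<chi> j i. tree_weight A r w0 \<delta> (es i) $ j)"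
    and feat_div: "\<exists>xs :: 'k \<Rightarrow> real^'d. (\<forall>i. xs i \<in> X) \<and>
                    invertible (\<chi> j i. \<Psi> (xs i) $ j)"
    and fit: "\<forall>e\<in>E. \<forall>x\<in>X. m e x = tree_weight A r w0h \<delta>h e \<bullet> \<Psi>h x"
  shows "\<exists>L :: real^'k^'k. invertible L \<and>
           (\<forall>x\<in>X. \<Psi> x = L *v \<Psi>h x) \<and>
           (\<forall>e\<in>E. tree_weight A r w0 \<delta> e v* L = tree_weight A r w0h \<delta>h e) \<and>
           (\<forall>a\<in>A. \<delta> a v* L = \<delta>h a)"
proof -
  let ?w = "tree_weight A r w0 \<delta>" and ?wh = "tree_weight A r w0h \<delta>h"
  have "?w e \<bullet> \<Psi> x = ?wh e \<bullet> \<Psi>h x" if "e \<in> E" "x \<in> X" for e x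
    using model fit that by simp
  moreover obtain es :: "'k \<Rightarrow> 'e" and xs :: "'k \<Rightarrow> real^'d"
    where "\<And>i. es i \<in> E" "invertible (\<chi> j i. ?w (es i) $ j)"
      and "\<And>i. xs i \<in> X" "invertible (\<chi> j i. \<Psi> (xs i) $ j)"
    using env_div feat_div by blast
  ultimately obtain L :: "real^'k^'k" where L: "invertible L"
    and \<Psi>: "\<And>x. x \<in> X \<Longrightarrow> \<Psi> x = L *v \<Psi>h x"
    and w: "\<And>e. e \<in> E \<Longrightarrow> ?w e v* L = ?wh e"
    by (rule inner_factorization_unique) blast+
  have "\<delta> (u, v) v* L = \<delta>h (u, v)" if arc: "(u, v) \<in> A" for u v
  proof -
    have "u \<in> E" "v \<in> E" using arc_in_vertices[OF tree arc] .
    have "\<delta> (u, v) v* L = (?w v - ?w u) v* L"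
      using tree_weight_arc[OF tree arc, where w = w0 and \<delta> = \<delta>] by simp
    also have "\<dots> = ?wh v - ?wh u"
      using w \<open>u \<in> E\<close> \<open>v \<in> E\<close> by (simp add: vector_matrix_mult_diff_distrib)
    also have "\<dots> = \<delta>h (u, v)"
      using tree_weight_arc[OF tree arc, where w = w0h and \<delta> = \<delta>h] by simp
    finally show ?thesis .
  qed
  with L \<Psi> w show ?thesis by auto
qed

end
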